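(* For any $x_0\in\mathbb R^N$ and any $R>0$ there exists $\phi\in C^2_c(\mathbb R^N)$ with $\mathrm{supp}(\phi)\subset B_{2R}(x_0)$, $\phi\equiv1$ on $B_R(x_0)$, $0\le\phi\le1$, such that $$\phi^{-\frac m{1-m}}(x)\,|\mathcal L_{\gamma,\beta}(\phi)(x)|^{\frac1{1-m}}\le\kappa_{10}\big(\rho^{\gamma,\beta}_{x_0}(R)\big)^{-\frac1{1-m}}\quad\text{for all }x\in\mathbb R^N,$$ where $\kappa_{10}>0$ depends only on $N,\gamma,\beta,m$.
   Context: $N\ge3$, $m\in(0,1)$, and $\gamma,\beta\in\mathbb R$ satisfy $\gamma<N$ and $\gamma-2<\beta\le\frac{N-2}{N}\gamma$. $\mathcal L_{\gamma,\beta}f=|x|^\gamma\nabla\cdot(|x|^{-\beta}\nabla f)$, which for smooth $f$ equals $|x|^{\gamma-\beta}[\Delta f-\beta\frac{x}{|x|^2}\cdot\nabla f]$. $\rho^{\gamma,\beta}_{x_0}(R)=\big(\int_{B_R(x_0)}|x|^{(\beta-\gamma)N/2}dx\big)^{2/N}$. The left-hand side is understood to be $0$ where $\mathcal L_{\gamma,\beta}(\phi)=0$ (in particular outside the support of $\phi$). *)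

theory Defs
  imports "HOL-Analysis.Analysis"
begin

text \<open>Space R^N is modelled as real^'n, with N = CARD('n).\<close>

definition grad :: "(real^'n \<Rightarrow> real) \<Rightarrow> real^'n \<Rightarrow> real^'n" where
  "grad f x = (\<chi> i. frechet_derivative f (at x) (axis i 1))"

definition hess_entry :: "(real^'n \<Rightarrow> real) \<Rightarrow> 'n \<Rightarrow> 'n \<Rightarrow> real^'n \<Rightarrow> real" where
  "hess_entry f i j x = frechet_derivative (\<lambda>y. grad f y $ i) (at x) (axis j 1)"

definition laplacian :: "(real^'n \<Rightarrow> real) \<Rightarrow> real^'n \<Rightarrow> real" where
  "laplacian f x = (\<Sum>i\<in>UNIV. hess_entry f i i x)"

definition C2 :: "(real^'n \<Rightarrow> real) \<Rightarrow> bool" where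
  "C2 f \<longleftrightarrow> (\<forall>x. f differentiable (at x)) \<and> (\<forall>x. grad f differentiable (at x)) \<and>
     (\<forall>i j. continuous_on UNIV (hess_entry f i j))"

definition L_op :: "real \<Rightarrow> real \<Rightarrow> (real^'n \<Rightarrow> real) \<Rightarrow> real^'n \<Rightarrow> real" where
  "L_op \<gamma> \<beta> f x = norm x powr (\<gamma> - \<beta>) *
      (laplacian f x - \<beta> * ((inverse ((norm x)\<^sup>2) *\<^sub>R x) \<bullet> grad f x))"

definition rho :: "real \<Rightarrow> real \<Rightarrow> real^'n \<Rightarrow> real \<Rightarrow> real" where
  "rho \<gamma> \<beta> x0 R = (integral (ball x0 R) (\<lambda>x. norm x powr ((\<beta> - \<gamma>) * real CARD('n) / 2)))
      powr (2 / real CARD('n))"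

end

theory Submission
  imports Defs
begin

(* The cut-off is radial, phi(y) = q(y)^k, where q is a C^2 step function of |y - x0|^2 falling
   from 1 to 0 on an annulus a < |y - x0| < a + R/4 with R <= a and a + R/4 < 2R; a is chosen so
   that the annulus keeps distance R/5 from the origin, where the weights of L blow up.  The first
   and second derivatives of q^k are O(q^(k-2)) with constants of order R^-2, and
   q^(k-2) <= (q^k)^m as soon as k (1 - m) >= 2, so |L phi(x)| <= K |x|^(gamma-beta) R^-2 phi(x)^m.
   Since beta > gamma - 2, the weight |y|^((beta-gamma)N/2) is locally integrable, and on the annulus
   its integral over B_R(x0) is at most K' R^N |x|^((beta-gamma)N/2); hence
   rho(R) <= K'^(2/N) R^2 |x|^(beta-gamma) and all powers of |x| and R cancel. *)

section \<open>A \<open>C\<^sup>2\<close> step function and the cut-off profile\<close>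

definition pos_pow :: "nat \<Rightarrow> real \<Rightarrow> real" where
  "pos_pow n s = (max 0 s) ^ n"

lemma pos_pow_eq_if: "0 < n \<Longrightarrow> pos_pow n s = (if s \<in> {..0} then 0 else s ^ n)"
  by (simp add: pos_pow_def max_def)

lemma pos_pow_nonneg [simp]: "0 \<le> pos_pow n s"
  by (simp add: pos_pow_def)

lemma pos_pow_eq_0 [simp]: "s \<le> 0 \<Longrightarrow> 0 < n \<Longrightarrow> pos_pow n s = 0"
  by (simp add: pos_pow_def)

lemma pos_pow_pos: "0 < s \<Longrightarrow> 0 < pos_pow n s"
  by (simp add: pos_pow_def)

lemma has_real_derivative_pos_pow:
  assumes "2 \<le> n"
  shows "(pos_pow n has_real_derivative real n * pos_pow (n - 1) s) (at s)"
proof -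
  have "((\<lambda>s. if s \<in> {..0} then 0 else s ^ n) has_vector_derivative
      (if s \<in> {..0} then 0 else real n * s ^ (n - 1))) (at s within UNIV)"
  proof (rule has_vector_derivative_If_within_closures[where T = "{0<..}"])
    show "((\<lambda>s. s ^ n) has_vector_derivative real n * s ^ (n - 1))
        (at s within {0<..} \<union> closure {..0} \<inter> closure {0<..})"
      by (simp flip: has_real_derivative_iff_has_vector_derivative)
  qed (use assms in auto)
  moreover have "pos_pow n = (\<lambda>s. if s \<in> {..0} then 0 else s ^ n)"
    using assms by (simp add: pos_pow_eq_if fun_eq_iff)
  moreover have "real n * pos_pow (n - 1) s = (if s \<in> {..0} then 0 else real n * s ^ (n - 1))"
    using assms by (simp add: pos_pow_eq_if)
  ultimately show ?thesis
    by (simp add: has_real_derivative_iff_has_vector_derivative)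
qed

lemma has_real_derivative_pos_pow_compose [derivative_intros]:
  assumes "2 \<le> n" "(f has_real_derivative f') (at x within S)"
  shows "((\<lambda>x. pos_pow n (f x)) has_real_derivative real n * pos_pow (n - 1) (f x) * f') (at x within S)"
  using DERIV_chain'[OF assms(2) has_real_derivative_pos_pow[OF assms(1)]] by simp

lemma continuous_on_pos_pow [continuous_intros]:
  "continuous_on S f \<Longrightarrow> continuous_on S (\<lambda>x. pos_pow n (f x))"
  unfolding pos_pow_def by (intro continuous_intros)

definition step_den :: "real \<Rightarrow> real" where
  "step_den s = pos_pow 3 (1 - s) + pos_pow 3 s"

definition smooth_step :: "real \<Rightarrow> real" where
  "smooth_step s = pos_pow 3 (1 - s) / step_den s"

definition step_num' :: "real \<Rightarrow> real" where
  "step_num' s = -3 * (pos_pow 2 (1 - s) * pos_pow 3 s + pos_pow 3 (1 - s) * pos_pow 2 s)"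

definition smooth_step' :: "real \<Rightarrow> real" where
  "smooth_step' s = step_num' s / (step_den s)\<^sup>2"

definition smooth_step'' :: "real \<Rightarrow> real" where
  "smooth_step'' s =
     (6 * (pos_pow 1 (1 - s) * pos_pow 3 s - pos_pow 3 (1 - s) * pos_pow 1 s) * step_den s
      - 6 * step_num' s * (pos_pow 2 s - pos_pow 2 (1 - s))) / (step_den s) ^ 3"

lemma step_den_pos: "0 < step_den s"
proof (cases "s \<le> 1 / 2")
  case True
  then have "0 < pos_pow 3 (1 - s)" by (intro pos_pow_pos) simp
  then show ?thesis by (simp add: step_den_def add_pos_nonneg)
next
  case False
  then have "0 < pos_pow 3 s" by (intro pos_pow_pos) simp
  then show ?thesis by (simp add: step_den_def add_nonneg_pos)
qed

lemma step_den_neq_0 [simp]: "step_den s \<noteq> 0"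
  using step_den_pos[of s] by simp

lemma step_den_has_real_derivative:
  "(step_den has_real_derivative 3 * (pos_pow 2 s - pos_pow 2 (1 - s))) (at s)"
  unfolding step_den_def[abs_def]
  by (auto intro!: derivative_eq_intros simp: algebra_simps)

lemma step_num'_has_real_derivative:
  "(step_num' has_real_derivative
     6 * (pos_pow 1 (1 - s) * pos_pow 3 s - pos_pow 3 (1 - s) * pos_pow 1 s)) (at s)"
  unfolding step_num'_def[abs_def]
  by (auto intro!: derivative_eq_intros simp: algebra_simps)

lemma smooth_step_has_real_derivative [derivative_intros]:
  assumes "(f has_real_derivative f') (at x within S)"
  shows "((\<lambda>x. smooth_step (f x)) has_real_derivative smooth_step' (f x) * f') (at x within S)"
proof -
  have "(smooth_step has_real_derivative smooth_step' s) (at s)" for s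
    unfolding smooth_step_def[abs_def] step_den_def
    using step_den_pos[of s]
    by (auto intro!: derivative_eq_intros
        simp: smooth_step'_def step_num'_def step_den_def power2_eq_square algebra_simps)
  then show ?thesis
    by (rule DERIV_chain'[OF assms])
qed

lemma smooth_step'_has_real_derivative [derivative_intros]:
  assumes "(f has_real_derivative f') (at x within S)"
  shows "((\<lambda>x. smooth_step' (f x)) has_real_derivative smooth_step'' (f x) * f') (at x within S)"
proof -
  have "(smooth_step' has_real_derivative smooth_step'' s) (at s)" for s
  proof -
    have "((\<lambda>s. step_num' s / (step_den s)\<^sup>2) has_real_derivative smooth_step'' s) (at s)"
      apply (rule derivative_eq_intros step_den_has_real_derivative step_num'_has_real_derivative refl
          | simp)+
      by (simp add: smooth_step''_def field_simps) algebra
    then show ?thesis unfolding smooth_step'_def[abs_def] .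
  qed
  then show ?thesis
    by (rule DERIV_chain'[OF assms])
qed

lemma continuous_on_step_den [continuous_intros]:
  "continuous_on S f \<Longrightarrow> continuous_on S (\<lambda>x. step_den (f x))"
  unfolding step_den_def by (intro continuous_intros)

lemma continuous_on_smooth_step [continuous_intros]:
  "continuous_on S f \<Longrightarrow> continuous_on S (\<lambda>x. smooth_step (f x))"
  unfolding smooth_step_def by (intro continuous_intros) auto

lemma continuous_on_smooth_step' [continuous_intros]:
  "continuous_on S f \<Longrightarrow> continuous_on S (\<lambda>x. smooth_step' (f x))"
  unfolding smooth_step'_def step_num'_def
  by (intro continuous_intros) auto

lemma continuous_on_smooth_step'' [continuous_intros]:
  "continuous_on S f \<Longrightarrow> continuous_on S (\<lambda>x. smooth_step'' (f x))"
  unfolding smooth_step''_def step_num'_def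
  by (intro continuous_intros) auto

lemma smooth_step_derivs_eq_0:
  assumes "s \<le> 0 \<or> 1 \<le> s"
  shows "smooth_step' s = 0" "smooth_step'' s = 0"
  using assms by (auto simp: smooth_step'_def smooth_step''_def step_num'_def)

lemma smooth_step_bounds:
  shows "0 \<le> smooth_step s" "smooth_step s \<le> 1"
    and "s \<le> 0 \<Longrightarrow> smooth_step s = 1" "1 \<le> s \<Longrightarrow> smooth_step s = 0"
    and "s < 1 \<Longrightarrow> 0 < smooth_step s"
proof -
  have den: "0 < pos_pow 3 (1 - s) + pos_pow 3 s"
    using step_den_pos[of s] by (simp add: step_den_def)
  then show "0 \<le> smooth_step s" "smooth_step s \<le> 1"
    by (simp_all add: smooth_step_def step_den_def divide_le_eq)
  show "s \<le> 0 \<Longrightarrow> smooth_step s = 1" "1 \<le> s \<Longrightarrow> smooth_step s = 0"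
    using den by (simp_all add: smooth_step_def step_den_def)
  show "s < 1 \<Longrightarrow> 0 < smooth_step s"
    using den by (simp add: smooth_step_def step_den_def pos_pow_pos)
qed

lemma smooth_step_derivs_bounded:
  obtains M where "0 < M" "\<And>s. \<bar>smooth_step' s\<bar> \<le> M" "\<And>s. \<bar>smooth_step'' s\<bar> \<le> M"
proof -
  have cont: "continuous_on {0..1} smooth_step'" "continuous_on {0..1} smooth_step''"
    using continuous_on_smooth_step'[OF continuous_on_id] continuous_on_smooth_step''[OF continuous_on_id]
    by simp_all
  obtain M1 where M1: "\<And>s. s \<in> {0..1} \<Longrightarrow> norm (smooth_step' s) \<le> M1"
    using continuous_on_compact_bound[OF compact_Icc cont(1)] by metis
  obtain M2 where M2: "\<And>s. s \<in> {0..1} \<Longrightarrow> norm (smooth_step'' s) \<le> M2"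
    using continuous_on_compact_bound[OF compact_Icc cont(2)] by metis
  show ?thesis
  proof (rule that[of "max 1 (max M1 M2)"])
    fix s :: real
    have "s \<in> {0..1} \<or> s \<le> 0 \<or> 1 \<le> s" by auto
    then show "\<bar>smooth_step' s\<bar> \<le> max 1 (max M1 M2)" "\<bar>smooth_step'' s\<bar> \<le> max 1 (max M1 M2)"
      using M1[of s] M2[of s] smooth_step_derivs_eq_0[of s] by auto
  qed simp
qed

definition rescale :: "real \<Rightarrow> real \<Rightarrow> real \<Rightarrow> real" where
  "rescale A B t = (t - A) / (B - A)"

definition cutoff_profile :: "nat \<Rightarrow> real \<Rightarrow> real \<Rightarrow> real \<Rightarrow> real" where
  "cutoff_profile k A B t = smooth_step (rescale A B t) ^ k"

definition cutoff_profile' :: "nat \<Rightarrow> real \<Rightarrow> real \<Rightarrow> real \<Rightarrow> real" where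
  "cutoff_profile' k A B t =
     real k * smooth_step (rescale A B t) ^ (k - 1) * smooth_step' (rescale A B t) / (B - A)"

definition cutoff_profile'' :: "nat \<Rightarrow> real \<Rightarrow> real \<Rightarrow> real \<Rightarrow> real" where
  "cutoff_profile'' k A B t =
     real k * (real (k - 1) * smooth_step (rescale A B t) ^ (k - 2) * (smooth_step' (rescale A B t))\<^sup>2
       + smooth_step (rescale A B t) ^ (k - 1) * smooth_step'' (rescale A B t)) / (B - A)\<^sup>2"

lemma has_real_derivative_rescale: "(rescale A B has_real_derivative 1 / (B - A)) (at t)"
  unfolding rescale_def[abs_def]
  by (rule DERIV_cdivide[where D = 1, simplified]) (auto intro!: derivative_eq_intros)

lemma rescale_le_0_iff: "A < B \<Longrightarrow> rescale A B t \<le> 0 \<longleftrightarrow> t \<le> A"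
  by (simp add: rescale_def divide_le_0_iff)

lemma one_le_rescale_iff: "A < B \<Longrightarrow> 1 \<le> rescale A B t \<longleftrightarrow> B \<le> t"
  by (simp add: rescale_def le_divide_eq)

lemma has_real_derivative_cutoff_profile:
  "(cutoff_profile k A B has_real_derivative cutoff_profile' k A B t) (at t)"
  unfolding cutoff_profile_def[abs_def]
  by (rule derivative_eq_intros has_real_derivative_rescale refl)+
     (simp add: cutoff_profile'_def)

lemma has_real_derivative_cutoff_profile':
  assumes "A \<noteq> B"
  shows "(cutoff_profile' k A B has_real_derivative cutoff_profile'' k A B t) (at t)"
proof -
  define d where "d = B - A"
  have d: "d \<noteq> 0" and k: "k - 1 - Suc 0 = k - 2" "k - Suc (Suc 0) = k - 2"
    using assms by (simp_all add: d_def)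
  show ?thesis
    unfolding cutoff_profile'_def[abs_def] cutoff_profile''_def d_def[symmetric]
    by (rule derivative_eq_intros has_real_derivative_rescale[of A B, folded d_def] refl)+
       (use d in \<open>simp_all add: k field_simps power2_eq_square\<close>)
qed

lemma continuous_on_rescale [continuous_intros]: "continuous_on S (rescale A B)"
  using has_real_derivative_rescale
  by (meson DERIV_isCont continuous_at_imp_continuous_on)

lemma continuous_on_cutoff_profile'': "A \<noteq> B \<Longrightarrow> continuous_on UNIV (cutoff_profile'' k A B)"
  unfolding cutoff_profile''_def[abs_def]
  by (intro continuous_intros) auto

lemma cutoff_profile_derivs_eq_0:
  assumes "A < B" "t \<le> A \<or> B \<le> t"
  shows "cutoff_profile' k A B t = 0" "cutoff_profile'' k A B t = 0"
proof -
  have "rescale A B t \<le> 0 \<or> 1 \<le> rescale A B t"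
    using assms by (simp add: rescale_le_0_iff one_le_rescale_iff)
  then show "cutoff_profile' k A B t = 0" "cutoff_profile'' k A B t = 0"
    by (simp_all add: cutoff_profile'_def cutoff_profile''_def smooth_step_derivs_eq_0)
qed

lemma cutoff_profile_derivs_le:
  fixes t :: real
  assumes "A < B" "2 \<le> k"
    and M: "\<And>s. \<bar>smooth_step' s\<bar> \<le> M" "\<And>s. \<bar>smooth_step'' s\<bar> \<le> M"
  defines "q \<equiv> smooth_step (rescale A B t)"
  shows "\<bar>cutoff_profile' k A B t\<bar> \<le> real k * M * q ^ (k - 2) / (B - A)"
    and "\<bar>cutoff_profile'' k A B t\<bar> \<le> real k * (real k * M\<^sup>2 + M) * q ^ (k - 2) / (B - A)\<^sup>2"
proof -
  define d where "d = smooth_step' (rescale A B t)"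
  define dd where "dd = smooth_step'' (rescale A B t)"
  have q: "0 \<le> q" "q \<le> 1"
    unfolding q_def using smooth_step_bounds by auto
  have q_pow: "q ^ (k - 1) \<le> q ^ (k - 2)" "0 \<le> q ^ (k - 2)"
    using q assms(2) by (auto intro: power_decreasing)
  have d: "\<bar>d\<bar> \<le> M" "\<bar>dd\<bar> \<le> M" "d\<^sup>2 \<le> M\<^sup>2"
    unfolding d_def dd_def using M power_mono[OF M(1), of _ 2] by auto
  have "\<bar>real k * q ^ (k - 1) * d\<bar> = real k * q ^ (k - 1) * \<bar>d\<bar>"
    using q by (simp add: abs_mult)
  also have "\<dots> \<le> real k * q ^ (k - 2) * M"
    using q q_pow d by (intro mult_mono) auto
  finally show "\<bar>cutoff_profile' k A B t\<bar> \<le> real k * M * q ^ (k - 2) / (B - A)"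
    using assms(1) by (simp add: cutoff_profile'_def q_def d_def abs_divide divide_right_mono mult_ac)
  have "\<bar>real (k - 1) * q ^ (k - 2) * d\<^sup>2 + q ^ (k - 1) * dd\<bar>
      \<le> real (k - 1) * q ^ (k - 2) * d\<^sup>2 + q ^ (k - 1) * \<bar>dd\<bar>"
    using q by (simp add: abs_mult abs_triangle_ineq[THEN order_trans])
  also have "\<dots> \<le> real k * q ^ (k - 2) * M\<^sup>2 + q ^ (k - 2) * M"
    using q q_pow d by (intro add_mono mult_mono) auto
  finally have "\<bar>real (k - 1) * q ^ (k - 2) * d\<^sup>2 + q ^ (k - 1) * dd\<bar> \<le> (real k * M\<^sup>2 + M) * q ^ (k - 2)"
    by (simp add: algebra_simps)
  then have "real k * \<bar>real (k - 1) * q ^ (k - 2) * d\<^sup>2 + q ^ (k - 1) * dd\<bar>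
      \<le> real k * ((real k * M\<^sup>2 + M) * q ^ (k - 2))"
    by (rule mult_left_mono) simp
  then show "\<bar>cutoff_profile'' k A B t\<bar> \<le> real k * (real k * M\<^sup>2 + M) * q ^ (k - 2) / (B - A)\<^sup>2"
    by (simp add: cutoff_profile''_def q_def d_def dd_def abs_mult abs_divide divide_right_mono mult_ac)
qed

section \<open>Radial functions\<close>

lemma has_derivative_radial:
  fixes x0 :: "'a::real_inner"
  assumes "\<And>t. (H has_real_derivative H' t) (at t)"
  shows "((\<lambda>y. H ((y - x0) \<bullet> (y - x0))) has_derivative
           (\<lambda>v. H' ((y - x0) \<bullet> (y - x0)) * (2 * ((y - x0) \<bullet> v)))) (at y)"
proof -
  have "((\<lambda>y. (y - x0) \<bullet> (y - x0)) has_derivative (\<lambda>v. 2 * ((y - x0) \<bullet> v))) (at y)"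
    by (rule derivative_eq_intros refl)+ (simp add: inner_commute)
  moreover have "(H has_derivative (\<lambda>h. H' t * h)) (at t)" for t
    using assms[of t] by (simp add: has_field_derivative_def)
  ultimately show ?thesis
    using diff_chain_at by (fastforce simp: o_def)
qed

lemma grad_radial:
  fixes x0 y :: "real^'n"
  assumes "\<And>t. (H has_real_derivative H' t) (at t)"
  shows "grad (\<lambda>y. H ((y - x0) \<bullet> (y - x0))) y = (2 * H' ((y - x0) \<bullet> (y - x0))) *\<^sub>R (y - x0)"
  unfolding grad_def frechet_derivative_at[OF has_derivative_radial[OF assms], symmetric]
  by (simp add: vec_eq_iff inner_axis)

lemma hess_entry_radial:
  fixes x0 y :: "real^'n"
  assumes "\<And>t. (H has_real_derivative H' t) (at t)" "\<And>t. (H' has_real_derivative H'' t) (at t)"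
  defines "r \<equiv> (y - x0) \<bullet> (y - x0)"
  shows "hess_entry (\<lambda>y. H ((y - x0) \<bullet> (y - x0))) i j y =
           4 * H'' r * ((y - x0) $ i) * ((y - x0) $ j) + 2 * H' r * (if i = j then 1 else 0)"
proof -
  have coord: "((\<lambda>y. (y - x0) $ i) has_derivative (\<lambda>v. v $ i)) (at y)"
    using bounded_linear.has_derivative[OF bounded_linear_vec_nth
        has_derivative_diff[OF has_derivative_ident has_derivative_const]]
    by simp
  have "((\<lambda>y. 2 * H' ((y - x0) \<bullet> (y - x0)) * ((y - x0) $ i)) has_derivative
      (\<lambda>v. 2 * (H'' r * (2 * ((y - x0) \<bullet> v))) * ((y - x0) $ i) + 2 * H' r * (v $ i))) (at y)"
    unfolding r_def
    by (rule derivative_eq_intros has_derivative_radial[OF assms(2)] coord refl)+ (simp add: algebra_simps)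
  moreover have "(\<lambda>y. grad (\<lambda>y. H ((y - x0) \<bullet> (y - x0))) y $ i)
      = (\<lambda>y. 2 * H' ((y - x0) \<bullet> (y - x0)) * ((y - x0) $ i))"
    by (simp add: grad_radial[OF assms(1)])
  ultimately show ?thesis
    unfolding hess_entry_def
    by (simp add: frechet_derivative_at[symmetric] inner_axis, simp add: axis_def)
qed

lemma laplacian_radial:
  fixes x0 y :: "real^'n"
  assumes "\<And>t. (H has_real_derivative H' t) (at t)" "\<And>t. (H' has_real_derivative H'' t) (at t)"
  defines "r \<equiv> (y - x0) \<bullet> (y - x0)"
  shows "laplacian (\<lambda>y. H ((y - x0) \<bullet> (y - x0))) y = 4 * H'' r * r + 2 * real CARD('n) * H' r"
proof -
  have "laplacian (\<lambda>y. H ((y - x0) \<bullet> (y - x0))) y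
      = (\<Sum>i\<in>UNIV. 4 * H'' r * ((y - x0) $ i * (y - x0) $ i) + 2 * H' r)"
    unfolding laplacian_def hess_entry_radial[OF assms(1,2)] r_def
    by (simp add: algebra_simps)
  also have "\<dots> = 4 * H'' r * r + 2 * real CARD('n) * H' r"
    by (simp add: sum.distrib sum_distrib_left r_def inner_vec_def)
  finally show ?thesis .
qed

lemma C2_radial:
  fixes x0 :: "real^'n"
  assumes "\<And>t. (H has_real_derivative H' t) (at t)" "\<And>t. (H' has_real_derivative H'' t) (at t)"
    and "continuous_on UNIV H''"
  shows "C2 (\<lambda>y. H ((y - x0) \<bullet> (y - x0)))"
  unfolding C2_def
proof (intro conjI allI)
  show "(\<lambda>y. H ((y - x0) \<bullet> (y - x0))) differentiable at x" for x
    using has_derivative_radial[OF assms(1)] by (auto simp: differentiable_def)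
  have "(\<lambda>y. H' ((y - x0) \<bullet> (y - x0))) differentiable at x" for x
    using has_derivative_radial[OF assms(2)] by (auto simp: differentiable_def)
  then show "grad (\<lambda>y. H ((y - x0) \<bullet> (y - x0))) differentiable at x" for x
    unfolding grad_radial[OF assms(1), abs_def] by (intro derivative_intros)
  have "continuous_on UNIV H'"
    using assms(2) by (meson DERIV_isCont continuous_at_imp_continuous_on)
  moreover have r: "continuous_on UNIV (\<lambda>y. (y - x0) \<bullet> (y - x0))"
    by (intro continuous_intros)
  ultimately show "continuous_on UNIV (hess_entry (\<lambda>y. H ((y - x0) \<bullet> (y - x0))) i j)" for i j
    unfolding hess_entry_radial[OF assms(1,2), abs_def]
    by (intro continuous_intros continuous_on_compose2[OF assms(3) r] continuous_on_compose2[OF _ r]) auto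
qed

lemma L_op_radial_le:
  fixes x x0 :: "real^'n"
  assumes "x \<noteq> 0"
    and "\<And>t. (H has_real_derivative H' t) (at t)" "\<And>t. (H' has_real_derivative H'' t) (at t)"
  defines "r \<equiv> (x - x0) \<bullet> (x - x0)"
  shows "\<bar>L_op \<gamma> \<beta> (\<lambda>y. H ((y - x0) \<bullet> (y - x0))) x\<bar> \<le> norm x powr (\<gamma> - \<beta>) *
           (4 * \<bar>H'' r\<bar> * r + 2 * (real CARD('n) + \<bar>\<beta>\<bar> * norm (x - x0) / norm x) * \<bar>H' r\<bar>)"
proof -
  let ?\<psi> = "\<lambda>y. H ((y - x0) \<bullet> (y - x0))"
  let ?drift = "(inverse ((norm x)\<^sup>2) *\<^sub>R x) \<bullet> grad ?\<psi> x"
  have "\<bar>x \<bullet> (x - x0)\<bar> / (norm x)\<^sup>2 \<le> norm x * norm (x - x0) / (norm x)\<^sup>2"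
    by (intro divide_right_mono Cauchy_Schwarz_ineq2) simp
  also have "\<dots> = norm (x - x0) / norm x"
    using assms(1) by (simp add: power2_eq_square)
  finally have "2 * \<bar>H' r\<bar> * (\<bar>x \<bullet> (x - x0)\<bar> / (norm x)\<^sup>2) \<le> 2 * \<bar>H' r\<bar> * (norm (x - x0) / norm x)"
    by (rule mult_left_mono) simp
  moreover have "?drift = 2 * H' r * (x \<bullet> (x - x0) / (norm x)\<^sup>2)"
    unfolding grad_radial[OF assms(2)] r_def by (simp add: divide_inverse)
  ultimately have drift: "\<bar>\<beta> * ?drift\<bar> \<le> \<bar>\<beta>\<bar> * (2 * \<bar>H' r\<bar> * (norm (x - x0) / norm x))"
    unfolding abs_mult[of \<beta>] by (intro mult_left_mono) (simp_all add: abs_mult abs_divide)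
  have lap: "\<bar>laplacian ?\<psi> x\<bar> \<le> 4 * \<bar>H'' r\<bar> * r + 2 * real CARD('n) * \<bar>H' r\<bar>"
    unfolding laplacian_radial[OF assms(2,3)] r_def[symmetric]
    by (simp add: r_def abs_mult abs_triangle_ineq[THEN order_trans])
  have "\<bar>laplacian ?\<psi> x - \<beta> * ?drift\<bar>
      \<le> 4 * \<bar>H'' r\<bar> * r + 2 * (real CARD('n) + \<bar>\<beta>\<bar> * norm (x - x0) / norm x) * \<bar>H' r\<bar>"
    using abs_triangle_ineq4[of "laplacian ?\<psi> x" "\<beta> * ?drift"] lap drift
    by (simp add: algebra_simps)
  then show ?thesis
    unfolding L_op_def abs_mult by (simp add: mult_left_mono)
qed

section \<open>Integrals of powers of the norm over balls\<close>

lemma integral_const_ball: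
  fixes c :: "'a::euclidean_space"
  assumes "0 \<le> r"
  shows "integral (ball c r) (\<lambda>_. k) = k * (measure lborel (ball (0::'a) 1) * r ^ DIM('a))"
proof -
  have "integral (ball c r) (\<lambda>_. k) = k * integral (ball c r) (\<lambda>_. 1::real)"
    using integral_mult_right[of "ball c r" k "\<lambda>_. 1::real"] by simp
  also have "integral (ball c r) (\<lambda>_. 1::real) = measure lebesgue (ball c r)"
    by (rule lmeasure_integral[symmetric]) simp
  also have "\<dots> = measure lborel (ball c r)"
    by (rule measure_completion) simp
  also have "\<dots> = r ^ DIM('a) * measure lborel (ball (0::'a) 1)"
    by (rule content_ball_conv_unit_ball[OF assms])
  finally show ?thesis
    by (simp add: mult_ac)
qed

lemma integrable_on_ball_if_bounded:
  fixes g :: "'a::euclidean_space \<Rightarrow> real"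
  assumes "g \<in> borel_measurable borel" "\<And>y. y \<in> ball c r \<Longrightarrow> \<bar>g y\<bar> \<le> M"
  shows "g integrable_on ball c r"
  by (rule measurable_bounded_by_integrable_imp_integrable_real[OF _ integrable_on_const])
     (use assms in \<open>auto simp: measurable_completion measurable_restrict_space1\<close>)

lemma integral_ball_le_if_bounded:
  fixes g :: "'a::euclidean_space \<Rightarrow> real"
  assumes "g \<in> borel_measurable borel" "\<And>y. y \<in> ball c r \<Longrightarrow> \<bar>g y\<bar> \<le> M" "0 \<le> r"
  shows "integral (ball c r) g \<le> M * (measure lborel (ball (0::'a) 1) * r ^ DIM('a))"
proof -
  have "integral (ball c r) g \<le> integral (ball c r) (\<lambda>_. M)"
    using assms(2)
    by (intro integral_le integrable_on_ball_if_bounded[OF assms(1,2)] integrable_on_const)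
       (auto dest: abs_le_D1)
  then show ?thesis
    using integral_const_ball[OF assms(3), of c M] by simp
qed

lemma dyadic_term_eq:
  fixes r e :: real and N j :: nat
  assumes r: "0 < r"
  shows "(r / 2 ^ (j + 1)) powr e * (r / 2 ^ j) ^ N
         = 2 powr (- e) * r powr (N + e) * (2 powr (- (N + e))) ^ j"
proof -
  have a: "(r / 2 ^ (j + 1)) powr e = exp (e * (ln r - (j + 1) * ln 2))"
    using r by (simp add: powr_def ln_div ln_realpow ln_mult algebra_simps)
  have "(r / 2 ^ j) ^ N = exp (ln ((r / 2 ^ j) ^ N))"
    using r by simp
  also have "\<dots> = exp (N * (ln r - j * ln 2))"
    using r by (simp add: ln_realpow ln_div)
  finally have b: "(r / 2 ^ j) ^ N = exp (N * (ln r - j * ln 2))" .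
  have c: "(2 powr (- (N + e))) ^ j = exp (j * (- (N + e) * ln 2))"
    by (simp add: powr_def exp_of_nat_mult[symmetric])
  have d: "2 powr (- e) * r powr (N + e) = exp (- e * ln 2 + (N + e) * ln r)"
    using r by (simp add: powr_def mult_exp_exp algebra_simps)
  show ?thesis
    unfolding a b c d exp_add[symmetric] by (simp add: algebra_simps)
qed

definition trunc_norm_powr :: "real \<Rightarrow> real \<Rightarrow> 'a::real_normed_vector \<Rightarrow> real" where
  "trunc_norm_powr e \<delta> y = (if \<delta> \<le> norm y then norm y powr e else 0)"

lemma trunc_norm_powr_bounds:
  assumes "e \<le> 0" "0 < \<delta>"
  shows "0 \<le> trunc_norm_powr e \<delta> y" "trunc_norm_powr e \<delta> y \<le> \<delta> powr e"
  using assms by (auto simp: trunc_norm_powr_def intro: powr_mono2')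

lemma integrable_trunc_norm_powr:
  fixes c :: "'a::euclidean_space"
  assumes "e \<le> 0" "0 < \<delta>"
  shows "trunc_norm_powr e \<delta> integrable_on ball c r"
proof (rule integrable_on_ball_if_bounded)
  show "trunc_norm_powr e \<delta> \<in> borel_measurable borel"
    unfolding trunc_norm_powr_def[abs_def] by measurable
  show "\<bar>trunc_norm_powr e \<delta> y\<bar> \<le> \<delta> powr e" for y :: 'a
    using trunc_norm_powr_bounds[OF assms, of y] by simp
qed

lemma integral_trunc_norm_powr_step:
  fixes r e :: real
  assumes "e \<le> 0" "0 < \<delta>'" "\<delta>' \<le> \<delta>" "\<delta> \<le> r"
  shows "integral (ball (0::'a::euclidean_space) r) (trunc_norm_powr e \<delta>')
         \<le> integral (ball (0::'a) r) (trunc_norm_powr e \<delta>) + \<delta>' powr e * (measure lborel (ball (0::'a) 1) * \<delta> ^ DIM('a))"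
proof -
  let ?shell = "\<lambda>y::'a. if y \<in> ball (0::'a) \<delta> then \<delta>' powr e else 0"
  have sub: "ball (0::'a) \<delta> \<inter> ball (0::'a) r = ball (0::'a) \<delta>"
    using assms by auto
  have shell_int: "?shell integrable_on ball (0::'a) r"
    by (simp only: integrable_restrict_Int sub integrable_on_const lmeasurable_ball)
  have "integral (ball (0::'a) r) (trunc_norm_powr e \<delta>')
      \<le> integral (ball (0::'a) r) (\<lambda>y. trunc_norm_powr e \<delta> y + ?shell y)"
  proof (rule integral_le)
    fix y :: 'a
    show "trunc_norm_powr e \<delta>' y \<le> trunc_norm_powr e \<delta> y + ?shell y"
      using assms trunc_norm_powr_bounds[of e \<delta>' y]
      by (auto simp: trunc_norm_powr_def)
  qed (use assms shell_int in \<open>auto intro!: integrable_add integrable_trunc_norm_powr\<close>)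
  also have "\<dots> = integral (ball (0::'a) r) (trunc_norm_powr e \<delta>) + integral (ball (0::'a) r) ?shell"
    by (rule integral_add[OF integrable_trunc_norm_powr shell_int]) (use assms in auto)
  also have "integral (ball (0::'a) r) ?shell = integral (ball (0::'a) \<delta>) (\<lambda>_. \<delta>' powr e)"
    by (simp only: integral_restrict_Int sub)
  finally show ?thesis
    using assms by (simp add: integral_const_ball)
qed

(* The truncation at r/2^(k+1) exceeds the one at r/2^k by at most (r/2^(k+1))^e on B_{r/2^k};
   summed over k these excesses form a geometric series of ratio 2^-(N+e) < 1. *)
lemma integral_trunc_norm_powr_le:
  fixes r e :: real
  assumes "- real DIM('a) < e" "e < 0" "0 < r"
  defines "\<rho> \<equiv> 2 powr (- (DIM('a) + e))"
  shows "integral (ball (0::'a::euclidean_space) r) (trunc_norm_powr e (r / 2 ^ k))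
         \<le> measure lborel (ball (0::'a) 1) * 2 powr (- e) * r powr (DIM('a) + e) / (1 - \<rho>)"
proof -
  define V where "V = measure lborel (ball (0::'a) 1)"
  have \<rho>: "0 < \<rho>" "\<rho> < 1"
    unfolding \<rho>_def using assms(1) by (auto intro!: powr_less_one)
  have "integral (ball (0::'a) r) (trunc_norm_powr e (r / 2 ^ k))
      \<le> (\<Sum>j<k. (r / 2 ^ (j + 1)) powr e * (V * (r / 2 ^ j) ^ DIM('a)))"
  proof (induction k)
    case 0
    have "integral (ball (0::'a) r) (trunc_norm_powr e r) = integral (ball (0::'a) r) (\<lambda>_. 0)"
      by (intro integral_cong) (auto simp: trunc_norm_powr_def)
    then show ?case by simp
  next
    case (Suc k)
    have "r / 2 ^ Suc k \<le> r / 2 ^ k" "r / 2 ^ k \<le> r"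
      using assms(3) by (simp_all add: divide_left_mono divide_le_eq one_le_power)
    then show ?case
      using Suc.IH integral_trunc_norm_powr_step[where 'a = 'a, of e "r / 2 ^ Suc k" "r / 2 ^ k" r] assms(2,3)
      by (simp add: V_def)
  qed
  also have "\<dots> = V * 2 powr (- e) * r powr (DIM('a) + e) * (\<Sum>j<k. \<rho> ^ j)"
    using dyadic_term_eq[OF assms(3), of _ e "DIM('a)"]
    by (simp add: \<rho>_def sum_distrib_left algebra_simps)
  also have "(\<Sum>j<k. \<rho> ^ j) = (1 - \<rho> ^ k) / (1 - \<rho>)"
    using \<rho> by (simp add: sum_gp_strict)
  also have "V * 2 powr (- e) * r powr (DIM('a) + e) * ((1 - \<rho> ^ k) / (1 - \<rho>))
      \<le> V * 2 powr (- e) * r powr (DIM('a) + e) * (1 / (1 - \<rho>))"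
    using \<rho> by (intro mult_left_mono divide_right_mono) (auto simp: V_def)
  finally show ?thesis
    by (simp add: V_def)
qed

lemma integral_norm_powr_ball0_le:
  fixes r e :: real
  assumes "- real DIM('a) < e" "e < 0" "0 < r"
  shows "(\<lambda>y. norm y powr e) integrable_on ball (0::'a::euclidean_space) r"
    and "integral (ball (0::'a) r) (\<lambda>y. norm y powr e)
         \<le> measure lborel (ball (0::'a) 1) * 2 powr (- e) * r powr (DIM('a) + e)
             / (1 - 2 powr (- (DIM('a) + e)))"
proof -
  let ?f = "\<lambda>k. trunc_norm_powr e (r / 2 ^ k) :: 'a \<Rightarrow> real"
  let ?C = "measure lborel (ball (0::'a) 1) * 2 powr (- e) * r powr (DIM('a) + e)
             / (1 - 2 powr (- (DIM('a) + e)))"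
  have int: "?f k integrable_on ball (0::'a) r" for k
    using assms by (intro integrable_trunc_norm_powr) auto
  have mono: "?f k y \<le> ?f (Suc k) y" for k y
  proof -
    have "r / 2 ^ Suc k \<le> r / 2 ^ k"
      using assms(3) by (simp add: divide_left_mono)
    then show ?thesis
      using assms by (auto simp: trunc_norm_powr_def)
  qed
  have lim: "(\<lambda>k. ?f k y) \<longlonglongrightarrow> norm y powr e" for y
  proof (cases "y = 0")
    case False
    have "(\<lambda>k. r / 2 ^ k) \<longlonglongrightarrow> 0"
      by (rule LIMSEQ_divide_realpow_zero) simp
    then have "eventually (\<lambda>k. r / 2 ^ k < norm y) sequentially"
      using False by (intro order_tendstoD(2)) auto
    then have "eventually (\<lambda>k. ?f k y = norm y powr e) sequentially"
      by eventually_elim (auto simp: trunc_norm_powr_def)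
    then show ?thesis
      by (rule tendsto_eventually)
  qed (simp add: trunc_norm_powr_def cong: if_cong)
  have le: "integral (ball (0::'a) r) (?f k) \<le> ?C" for k
    using integral_trunc_norm_powr_le[OF assms] by simp
  have nonneg: "0 \<le> integral (ball (0::'a) r) (?f k)" for k
    using assms by (intro integral_nonneg int) (auto intro: trunc_norm_powr_bounds)
  have bounded: "bounded (range (\<lambda>k. integral (ball (0::'a) r) (?f k)))"
    unfolding bounded_real using le nonneg by (intro exI[of _ ?C]) (auto simp: abs_of_nonneg)
  have "(\<lambda>y. norm y powr e) integrable_on ball (0::'a) r
        \<and> (\<lambda>k. integral (ball (0::'a) r) (?f k)) \<longlonglongrightarrow> integral (ball (0::'a) r) (\<lambda>y. norm y powr e)"
    by (rule monotone_convergence_increasing[OF int mono lim bounded])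
  then show "(\<lambda>y. norm y powr e) integrable_on ball (0::'a) r"
    and "integral (ball (0::'a) r) (\<lambda>y. norm y powr e) \<le> ?C"
    using le by (auto intro: tendsto_upperbound)
qed

lemma integrable_norm_powr_ball:
  fixes c :: "'a::euclidean_space" and e :: real
  assumes "- real DIM('a) < e" "0 < R"
  shows "(\<lambda>y. norm y powr e) integrable_on ball c R"
proof -
  have norm_less: "norm y < norm c + R" if "y \<in> ball c R" for y
    using that norm_triangle_ineq[of c "y - c"] by (simp add: dist_norm norm_minus_commute)
  show ?thesis
  proof (cases "0 \<le> e")
    case True
    show ?thesis
    proof (rule integrable_on_ball_if_bounded)
      fix y assume "y \<in> ball c R"
      then show "\<bar>norm y powr e\<bar> \<le> (norm c + R) powr e"
        using True norm_less[of y] by (simp add: powr_mono2)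
    qed simp
  next
    case False
    let ?S = "ball (0::'a) (norm c + R)"
    have sub: "ball c R \<inter> ?S = ball c R"
      using norm_less by auto
    have "(\<lambda>y. norm y powr e) integrable_on ?S"
      using False assms by (intro integral_norm_powr_ball0_le(1)) (auto intro: add_nonneg_pos)
    then have "(\<lambda>y. if y \<in> ball c R then norm y powr e else 0) integrable_on ?S"
      by (rule measurable_bounded_by_integrable_imp_integrable_real[rotated])
         (auto simp: measurable_completion measurable_restrict_space1)
    then show ?thesis
      by (simp only: integrable_restrict_Int sub)
  qed
qed

lemma ball_in_ball_away_from_origin:
  fixes x0 :: "'a::euclidean_space"
  assumes "0 < R"
  obtains z where "ball z (R / 8) \<subseteq> ball x0 R" "\<And>y. y \<in> ball z (R / 8) \<Longrightarrow> R / 2 \<le> norm y"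
proof -
  obtain v :: 'a where v: "norm v = 3 * R / 4"
    using vector_choose_size assms by (metis less_imp_le mult_nonneg_nonneg zero_le_divide_iff zero_le_numeral)
  have "2 * norm v \<le> norm (x0 + v) + norm (x0 - v)"
    using norm_triangle_ineq[of "x0 + v" "v - x0"] by (simp add: norm_minus_commute flip: scaleR_2)
  then have "3 * R / 4 \<le> norm (x0 + v) \<or> 3 * R / 4 \<le> norm (x0 - v)"
    using v by linarith
  then obtain z where "z = x0 + v \<or> z = x0 - v" "3 * R / 4 \<le> norm z"
    by blast
  then have z: "dist x0 z = 3 * R / 4" "3 * R / 4 \<le> norm z"
    using v by (auto simp: dist_norm)
  show ?thesis
  proof
    show "ball z (R / 8) \<subseteq> ball x0 R"
    proof
      fix y assume "y \<in> ball z (R / 8)"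
      then show "y \<in> ball x0 R"
        using z(1) dist_triangle[of x0 y z] assms by simp
    qed
    fix y assume "y \<in> ball z (R / 8)"
    then have "norm (z - y) < R / 8"
      by (simp add: dist_norm)
    then show "R / 2 \<le> norm y"
      using z(2) norm_triangle_ineq2[of z y] assms by linarith
  qed
qed

lemma integral_norm_powr_ball_pos:
  fixes x0 :: "'a::euclidean_space" and e :: real
  assumes "- real DIM('a) < e" "0 < R"
  shows "0 < integral (ball x0 R) (\<lambda>y. norm y powr e)"
proof -
  obtain z where sub: "ball z (R / 8) \<subseteq> ball x0 R"
    and lo: "\<And>y. y \<in> ball z (R / 8) \<Longrightarrow> R / 2 \<le> norm y"
    using ball_in_ball_away_from_origin[OF assms(2)] by blast
  define m where "m = min ((R / 2) powr e) ((norm x0 + 2 * R) powr e)"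
  have "0 < norm x0 + 2 * R"
    using assms(2) by (simp add: add_nonneg_pos)
  then have m: "0 < m"
    using assms(2) by (simp add: m_def)
  have low: "m \<le> norm y powr e" if "y \<in> ball z (R / 8)" for y
  proof -
    have "y \<in> ball x0 R"
      using that sub by blast
    then have "norm (y - x0) < R"
      by (simp add: dist_norm norm_minus_commute)
    then have hi: "norm y \<le> norm x0 + 2 * R"
      using norm_triangle_ineq[of x0 "y - x0"] assms(2) by simp
    show ?thesis
    proof (cases "0 \<le> e")
      case True
      then have "(R / 2) powr e \<le> norm y powr e"
        using lo[OF that] assms(2) by (intro powr_mono2) auto
      then show ?thesis
        by (simp add: m_def min.coboundedI1)
    next
      case False
      then have "(norm x0 + 2 * R) powr e \<le> norm y powr e"
        using lo[OF that] hi assms(2) by (intro powr_mono2') auto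
      then show ?thesis
        by (simp add: m_def min.coboundedI2)
    qed
  qed
  have "integral (ball x0 R) (\<lambda>y. if y \<in> ball z (R / 8) then m else 0) = integral (ball z (R / 8)) (\<lambda>_. m)"
    by (simp only: integral_restrict_Int Int_absorb2[OF sub])
  also have "\<dots> = m * (measure lborel (ball (0::'a) 1) * (R / 8) ^ DIM('a))"
    using assms(2) by (simp add: integral_const_ball)
  finally have "0 < integral (ball x0 R) (\<lambda>y. if y \<in> ball z (R / 8) then m else 0)"
    using m assms(2) by simp
  also have "\<dots> \<le> integral (ball x0 R) (\<lambda>y. norm y powr e)"
  proof (rule integral_le[OF _ integrable_norm_powr_ball[OF assms]])
    show "(\<lambda>y. if y \<in> ball z (R / 8) then m else 0) integrable_on ball x0 R"
      by (simp only: integrable_restrict_Int Int_absorb2[OF sub] integrable_on_const lmeasurable_ball)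
  qed (use low m in auto)
  finally show ?thesis .
qed

lemma integral_norm_powr_ball_le_nonneg_exp:
  fixes x0 x :: "'a::euclidean_space" and e :: real
  assumes "0 \<le> e" "0 < R" "R / 5 \<le> norm x" "norm (x - x0) \<le> 2 * R"
  shows "integral (ball x0 R) (\<lambda>y. norm y powr e)
         \<le> measure lborel (ball (0::'a) 1) * 16 powr e * R ^ DIM('a) * norm x powr e"
proof -
  have "integral (ball x0 R) (\<lambda>y. norm y powr e)
      \<le> (16 * norm x) powr e * (measure lborel (ball (0::'a) 1) * R ^ DIM('a))"
  proof (rule integral_ball_le_if_bounded)
    fix y assume "y \<in> ball x0 R"
    then have "norm (y - x0) < R"
      by (simp add: dist_norm norm_minus_commute)
    then have "norm y \<le> 16 * norm x"
      using norm_triangle_ineq[of x "y - x"] norm_triangle_ineq[of "y - x0" "x0 - x"] assms(3,4)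
      by (simp add: norm_minus_commute)
    then show "\<bar>norm y powr e\<bar> \<le> (16 * norm x) powr e"
      using assms(1) by (simp add: powr_mono2)
  qed (use assms in auto)
  then show ?thesis
    by (simp add: powr_mult mult_ac)
qed

lemma integral_norm_powr_ball_le_far:
  fixes x0 x :: "'a::euclidean_space" and e :: real
  assumes "e \<le> 0" "0 < R" "4 * R \<le> norm x0" "norm (x - x0) \<le> 2 * R"
  shows "integral (ball x0 R) (\<lambda>y. norm y powr e)
         \<le> measure lborel (ball (0::'a) 1) * 2 powr (- e) * R ^ DIM('a) * norm x powr e"
proof -
  have x: "2 * R \<le> norm x" "norm x \<le> norm x0 + 2 * R"
    using norm_triangle_ineq2[of x0 x] norm_triangle_ineq[of x0 "x - x0"] assms(3,4)
    by (simp_all add: norm_minus_commute)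
  have "integral (ball x0 R) (\<lambda>y. norm y powr e)
      \<le> (norm x / 2) powr e * (measure lborel (ball (0::'a) 1) * R ^ DIM('a))"
  proof (rule integral_ball_le_if_bounded)
    fix y assume "y \<in> ball x0 R"
    then have "norm x / 2 \<le> norm y"
      using norm_triangle_ineq2[of x0 y] x(2) assms(3) by (simp add: dist_norm)
    then have "norm y powr e \<le> (norm x / 2) powr e"
      using assms(1,2) x(1) by (intro powr_mono2') auto
    then show "\<bar>norm y powr e\<bar> \<le> (norm x / 2) powr e"
      by simp
  qed (use assms in auto)
  moreover have "(norm x / 2) powr e = 2 powr (- e) * norm x powr e"
    by (simp add: powr_divide powr_minus_divide)
  ultimately show ?thesis
    by (simp add: mult_ac)
qed

lemma integral_norm_powr_ball_le_near:
  fixes x0 x :: "'a::euclidean_space" and e :: real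
  assumes "- real DIM('a) < e" "e < 0" "0 < R" "norm x0 < 4 * R"
    and "0 < norm x" "norm (x - x0) \<le> 2 * R"
  shows "integral (ball x0 R) (\<lambda>y. norm y powr e)
         \<le> measure lborel (ball (0::'a) 1) * 2 powr (- e) / (1 - 2 powr (- (DIM('a) + e)))
             * 5 powr (DIM('a) + e) * 6 powr (- e) * R ^ DIM('a) * norm x powr e"
proof -
  let ?C = "measure lborel (ball (0::'a) 1) * 2 powr (- e) / (1 - 2 powr (- (DIM('a) + e)))"
  have C: "0 \<le> ?C"
    using assms(1) by (intro divide_nonneg_pos mult_nonneg_nonneg) (auto intro!: powr_less_one)
  have sub: "ball x0 R \<subseteq> ball 0 (5 * R)"
  proof
    fix y assume "y \<in> ball x0 R"
    then show "y \<in> ball 0 (5 * R)"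
      using assms(4) norm_triangle_ineq[of x0 "y - x0"] by (simp add: dist_norm norm_minus_commute)
  qed
  have R: "R powr e \<le> 6 powr (- e) * norm x powr e"
  proof -
    have "norm x \<le> 6 * R"
      using norm_triangle_ineq[of x0 "x - x0"] assms(4,6) by simp
    then have "(6 * R) powr e \<le> norm x powr e"
      using assms(2,5) by (intro powr_mono2') auto
    then show ?thesis
      using assms(3) by (simp add: powr_mult powr_minus field_simps)
  qed
  have "integral (ball x0 R) (\<lambda>y. norm y powr e) \<le> integral (ball (0::'a) (5 * R)) (\<lambda>y. norm y powr e)"
    using assms(1-3) by (intro integral_subset_le sub integrable_norm_powr_ball) auto
  also have "\<dots> \<le> ?C * (5 * R) powr (DIM('a) + e)"
    using integral_norm_powr_ball0_le(2)[of e "5 * R", where 'a = 'a] assms by simp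
  also have "\<dots> = ?C * (5 powr (DIM('a) + e) * R ^ DIM('a) * R powr e)"
    using assms(3) by (simp add: powr_mult powr_add powr_realpow)
  also have "\<dots> \<le> ?C * (5 powr (DIM('a) + e) * R ^ DIM('a) * (6 powr (- e) * norm x powr e))"
    using C R assms(3) by (intro mult_left_mono) auto
  finally show ?thesis
    by (simp add: mult_ac)
qed

lemma integral_norm_powr_ball_le:
  fixes e :: real
  assumes "- real DIM('a) < e"
  obtains K where "0 < K"
    "\<And>(x0::'a::euclidean_space) x R. 0 < R \<Longrightarrow> R / 5 \<le> norm x \<Longrightarrow> norm (x - x0) \<le> 2 * R \<Longrightarrow>
       integral (ball x0 R) (\<lambda>y. norm y powr e) \<le> K * R ^ DIM('a) * norm x powr e"
proof -
  define V where "V = measure lborel (ball (0::'a) 1)"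
  have V: "0 < V"
    unfolding V_def by (rule content_ball_pos) simp
  show ?thesis
  proof (cases "0 \<le> e")
    case True
    show ?thesis
      by (rule that[of "V * 16 powr e"]) (use V integral_norm_powr_ball_le_nonneg_exp[OF True] in \<open>auto simp: V_def\<close>)
  next
    case False
    define C where "C = V * 2 powr (- e) / (1 - 2 powr (- (DIM('a) + e))) * 5 powr (DIM('a) + e) * 6 powr (- e)"
    have C: "0 \<le> C"
      unfolding C_def using assms V
      by (intro divide_nonneg_pos mult_nonneg_nonneg) (auto intro!: powr_less_one)
    show ?thesis
    proof (rule that[of "V * 2 powr (- e) + C"])
      show "0 < V * 2 powr (- e) + C"
        using V C by (simp add: add_pos_nonneg)
      fix x0 x :: 'a and R :: real
      assume R: "0 < R" and x: "R / 5 \<le> norm x" "norm (x - x0) \<le> 2 * R"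
      have nonneg: "0 \<le> R ^ DIM('a) * norm x powr e"
        using R by simp
      consider "4 * R \<le> norm x0" | "norm x0 < 4 * R"
        by linarith
      then have "integral (ball x0 R) (\<lambda>y. norm y powr e)
          \<le> V * 2 powr (- e) * (R ^ DIM('a) * norm x powr e) + C * (R ^ DIM('a) * norm x powr e)"
      proof cases
        case 1
        then have "integral (ball x0 R) (\<lambda>y. norm y powr e) \<le> V * 2 powr (- e) * (R ^ DIM('a) * norm x powr e)"
          using integral_norm_powr_ball_le_far[of e R x0 x] False R x by (simp add: V_def mult_ac)
        then show ?thesis
          using C nonneg by (simp add: add_increasing2)
      next
        case 2
        have "0 < norm x"
          using R x(1) by linarith
        then have "integral (ball x0 R) (\<lambda>y. norm y powr e) \<le> C * (R ^ DIM('a) * norm x powr e)"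
          using integral_norm_powr_ball_le_near[of e R x0 x] 2 assms False R x by (simp add: V_def C_def mult_ac)
        then show ?thesis
          using V nonneg by (simp add: add_increasing)
      qed
      then show "integral (ball x0 R) (\<lambda>y. norm y powr e) \<le> (V * 2 powr (- e) + C) * R ^ DIM('a) * norm x powr e"
        by (simp add: algebra_simps)
    qed
  qed
qed

section \<open>The cut-off function\<close>

lemma annulus_avoiding_origin:
  fixes x0 :: "'a::real_normed_vector"
  assumes "0 < R"
  obtains a where "R \<le> a" "a + R / 4 < 2 * R"
    "\<And>x. a < norm (x - x0) \<Longrightarrow> norm (x - x0) < a + R / 4 \<Longrightarrow> R / 5 \<le> norm x"
proof (cases "3 * R / 2 \<le> norm x0")
  case True
  show ?thesis
  proof (rule that[of R])
    fix x assume "norm (x - x0) < R + R / 4"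
    then show "R / 5 \<le> norm x"
      using True norm_triangle_ineq2[of x0 x] assms by (simp add: norm_minus_commute)
  qed (use assms in auto)
next
  case False
  show ?thesis
  proof (rule that[of "17 * R / 10"])
    fix x assume "17 * R / 10 < norm (x - x0)"
    then show "R / 5 \<le> norm x"
      using False norm_triangle_ineq4[of x x0] by simp
  qed (use assms in auto)
qed

lemma radial_cutoff:
  fixes x0 :: "real^'n" and a b :: real and k :: nat
  assumes "0 < a" "a < b" "0 < k"
  defines "\<phi> \<equiv> \<lambda>y. cutoff_profile k (a\<^sup>2) (b\<^sup>2) ((y - x0) \<bullet> (y - x0))"
  shows "C2 \<phi>" "closure {x. \<phi> x \<noteq> 0} \<subseteq> cball x0 b" "\<forall>x\<in>cball x0 a. \<phi> x = 1"
    and "\<forall>x. 0 \<le> \<phi> x \<and> \<phi> x \<le> 1"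
proof -
  have ab: "a\<^sup>2 < b\<^sup>2"
    using assms by (simp add: power_strict_mono)
  have \<phi>_eq: "\<phi> y = smooth_step (rescale (a\<^sup>2) (b\<^sup>2) ((norm (y - x0))\<^sup>2)) ^ k" for y
    by (simp add: \<phi>_def cutoff_profile_def power2_norm_eq_inner)
  show "C2 \<phi>"
    unfolding \<phi>_def using ab
    by (intro C2_radial[OF has_real_derivative_cutoff_profile has_real_derivative_cutoff_profile'
          continuous_on_cutoff_profile'']) auto
  have "\<phi> y = 0" if "b < norm (y - x0)" for y
  proof -
    have "b\<^sup>2 \<le> (norm (y - x0))\<^sup>2"
      using that assms by (intro power_mono) auto
    then show ?thesis
      using ab assms(3) by (simp add: \<phi>_eq smooth_step_bounds one_le_rescale_iff)
  qed
  then have "{x. \<phi> x \<noteq> 0} \<subseteq> cball x0 b"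
    by (force simp: dist_norm norm_minus_commute)
  then show "closure {x. \<phi> x \<noteq> 0} \<subseteq> cball x0 b"
    by (rule closure_minimal) simp
  show "\<forall>x\<in>cball x0 a. \<phi> x = 1"
  proof
    fix x assume "x \<in> cball x0 a"
    then have "(norm (x - x0))\<^sup>2 \<le> a\<^sup>2"
      by (intro power_mono) (auto simp: dist_norm norm_minus_commute)
    then show "\<phi> x = 1"
      using ab by (simp add: \<phi>_eq smooth_step_bounds rescale_le_0_iff)
  qed
  show "\<forall>x. 0 \<le> \<phi> x \<and> \<phi> x \<le> 1"
    unfolding \<phi>_eq using smooth_step_bounds by (auto intro: power_le_one)
qed

lemma L_op_radial_cutoff_le:
  fixes x0 x :: "real^'n" and a b M :: real and k :: nat
  assumes "0 < a" "a < b" "2 \<le> k" "x \<noteq> 0"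
    and M: "\<And>s. \<bar>smooth_step' s\<bar> \<le> M" "\<And>s. \<bar>smooth_step'' s\<bar> \<le> M"
  defines "\<phi> \<equiv> \<lambda>y. cutoff_profile k (a\<^sup>2) (b\<^sup>2) ((y - x0) \<bullet> (y - x0))"
  assumes "L_op \<gamma> \<beta> \<phi> x \<noteq> 0"
  obtains q where "0 < q" "q \<le> 1" "\<phi> x = q ^ k" "a < norm (x - x0)" "norm (x - x0) < b"
    "\<bar>L_op \<gamma> \<beta> \<phi> x\<bar> \<le> norm x powr (\<gamma> - \<beta>) *
       (4 * b\<^sup>2 * (k * (k * M\<^sup>2 + M)) / (b\<^sup>2 - a\<^sup>2)\<^sup>2
        + 2 * (CARD('n) + \<bar>\<beta>\<bar> * b / norm x) * (k * M) / (b\<^sup>2 - a\<^sup>2)) * q ^ (k - 2)"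
proof -
  define t where "t = (x - x0) \<bullet> (x - x0)"
  define q where "q = smooth_step (rescale (a\<^sup>2) (b\<^sup>2) t)"
  let ?H' = "cutoff_profile' k (a\<^sup>2) (b\<^sup>2) t" and ?H'' = "cutoff_profile'' k (a\<^sup>2) (b\<^sup>2) t"
  have ab: "a\<^sup>2 < b\<^sup>2"
    using assms by (simp add: power_strict_mono)
  have t: "t = (norm (x - x0))\<^sup>2"
    by (simp add: t_def power2_norm_eq_inner)
  have L: "\<bar>L_op \<gamma> \<beta> \<phi> x\<bar> \<le> norm x powr (\<gamma> - \<beta>) *
      (4 * \<bar>?H''\<bar> * t + 2 * (real CARD('n) + \<bar>\<beta>\<bar> * norm (x - x0) / norm x) * \<bar>?H'\<bar>)"
    unfolding \<phi>_def t_def using ab assms(4)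
    by (intro L_op_radial_le has_real_derivative_cutoff_profile has_real_derivative_cutoff_profile') auto
  have "a\<^sup>2 < t \<and> t < b\<^sup>2"
  proof (rule ccontr)
    assume "\<not> (a\<^sup>2 < t \<and> t < b\<^sup>2)"
    then have "?H' = 0" "?H'' = 0"
      using cutoff_profile_derivs_eq_0[OF ab] by auto
    then show False
      using L assms(8) by simp
  qed
  then have "a\<^sup>2 < (norm (x - x0))\<^sup>2" "(norm (x - x0))\<^sup>2 < b\<^sup>2"
    by (simp_all add: t)
  then have r: "a < norm (x - x0)" "norm (x - x0) < b" "t \<le> b\<^sup>2"
    using assms(1,2) power_less_imp_less_base[of a 2] power_less_imp_less_base[of _ 2 b]
    by (auto simp: t)
  have q: "0 < q" "q \<le> 1"
    using \<open>a\<^sup>2 < t \<and> t < b\<^sup>2\<close> ab smooth_step_bounds(2,5)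
    by (auto simp: q_def rescale_def divide_less_eq)
  let ?P = "q ^ (k - 2)"
  have "4 * \<bar>?H''\<bar> * t \<le> 4 * (k * (k * M\<^sup>2 + M) * ?P / (b\<^sup>2 - a\<^sup>2)\<^sup>2) * b\<^sup>2"
    using cutoff_profile_derivs_le(2)[OF ab assms(3) M, of t] r(3) t
    by (intro mult_mono) (auto simp: q_def)
  also have "\<dots> = 4 * b\<^sup>2 * (k * (k * M\<^sup>2 + M)) / (b\<^sup>2 - a\<^sup>2)\<^sup>2 * ?P"
    by (simp add: mult_ac)
  finally have H'': "4 * \<bar>?H''\<bar> * t \<le> 4 * b\<^sup>2 * (k * (k * M\<^sup>2 + M)) / (b\<^sup>2 - a\<^sup>2)\<^sup>2 * ?P" .
  have "2 * (real CARD('n) + \<bar>\<beta>\<bar> * norm (x - x0) / norm x) * \<bar>?H'\<bar>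
      \<le> 2 * (real CARD('n) + \<bar>\<beta>\<bar> * b / norm x) * (k * M * ?P / (b\<^sup>2 - a\<^sup>2))"
    using cutoff_profile_derivs_le(1)[OF ab assms(3) M, of t] r(2) assms(1,2)
    by (intro mult_mono add_left_mono mult_left_mono divide_right_mono) (auto simp: q_def)
  also have "\<dots> = 2 * (CARD('n) + \<bar>\<beta>\<bar> * b / norm x) * (k * M) / (b\<^sup>2 - a\<^sup>2) * ?P"
    by (simp add: mult_ac)
  finally have H': "2 * (real CARD('n) + \<bar>\<beta>\<bar> * norm (x - x0) / norm x) * \<bar>?H'\<bar>
      \<le> 2 * (CARD('n) + \<bar>\<beta>\<bar> * b / norm x) * (k * M) / (b\<^sup>2 - a\<^sup>2) * ?P" .
  let ?c = "4 * b\<^sup>2 * (k * (k * M\<^sup>2 + M)) / (b\<^sup>2 - a\<^sup>2)\<^sup>2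
       + 2 * (CARD('n) + \<bar>\<beta>\<bar> * b / norm x) * (k * M) / (b\<^sup>2 - a\<^sup>2)"
  have "4 * \<bar>?H''\<bar> * t + 2 * (real CARD('n) + \<bar>\<beta>\<bar> * norm (x - x0) / norm x) * \<bar>?H'\<bar> \<le> ?c * ?P"
    using add_mono[OF H'' H'] by (simp only: distrib_right)
  then have "\<bar>L_op \<gamma> \<beta> \<phi> x\<bar> \<le> norm x powr (\<gamma> - \<beta>) * (?c * ?P)"
    using L by (meson mult_left_mono order_trans powr_ge_zero)
  then have "\<bar>L_op \<gamma> \<beta> \<phi> x\<bar> \<le> norm x powr (\<gamma> - \<beta>) * ?c * ?P"
    by (simp only: mult.assoc)
  moreover have "\<phi> x = q ^ k"
    by (simp add: \<phi>_def q_def t_def cutoff_profile_def)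
  ultimately show ?thesis
    using that q r(1,2) by blast
qed

lemma cutoff_coefficient_le:
  fixes R a b r M \<beta> :: real and k N :: nat
  assumes "0 < R" "R \<le> a" "b = a + R / 4" "b < 2 * R" "R / 5 \<le> r" "0 \<le> M"
  shows "4 * b\<^sup>2 * (k * (k * M\<^sup>2 + M)) / (b\<^sup>2 - a\<^sup>2)\<^sup>2 + 2 * (N + \<bar>\<beta>\<bar> * b / r) * (k * M) / (b\<^sup>2 - a\<^sup>2)
         \<le> (64 * (k * (k * M\<^sup>2 + M)) + (4 * N + 40 * \<bar>\<beta>\<bar>) * (k * M)) / R\<^sup>2"
proof -
  have gap: "R\<^sup>2 / 2 \<le> b\<^sup>2 - a\<^sup>2"
  proof -
    have "b\<^sup>2 - a\<^sup>2 = R / 4 * (2 * a + R / 4)"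
      using assms(3) by (simp add: power2_eq_square algebra_simps)
    moreover have "R / 4 * (2 * R) \<le> R / 4 * (2 * a + R / 4)"
      using assms(1,2) by (intro mult_left_mono) auto
    ultimately show ?thesis
      by (simp add: power2_eq_square)
  qed
  have R2: "0 < R\<^sup>2"
    using assms(1) by simp
  have b2: "b\<^sup>2 \<le> 4 * R\<^sup>2"
    using assms(1-4) power_mono[of b "2 * R" 2] by (simp add: power_mult_distrib)
  have "b / r \<le> 10"
    using assms(1,2,3,4,5) by (simp add: divide_le_eq)
  then have "\<bar>\<beta>\<bar> * (b / r) \<le> \<bar>\<beta>\<bar> * 10"
    by (rule mult_left_mono) simp
  then have "N + \<bar>\<beta>\<bar> * b / r \<le> N + 10 * \<bar>\<beta>\<bar>"
    by simp
  then have "2 * (N + \<bar>\<beta>\<bar> * b / r) * (k * M) / (b\<^sup>2 - a\<^sup>2) \<le> 2 * (N + 10 * \<bar>\<beta>\<bar>) * (k * M) / (R\<^sup>2 / 2)"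
    using gap R2 assms(1-3,5,6)
    by (intro frac_le mult_right_mono mult_left_mono mult_nonneg_nonneg add_nonneg_nonneg) auto
  also have "\<dots> = (4 * N + 40 * \<bar>\<beta>\<bar>) * (k * M) / R\<^sup>2"
    by (simp add: field_simps)
  finally have first_order: "2 * (N + \<bar>\<beta>\<bar> * b / r) * (k * M) / (b\<^sup>2 - a\<^sup>2) \<le> (4 * N + 40 * \<bar>\<beta>\<bar>) * (k * M) / R\<^sup>2" .
  have "4 * b\<^sup>2 * (k * (k * M\<^sup>2 + M)) / (b\<^sup>2 - a\<^sup>2)\<^sup>2 \<le> 4 * (4 * R\<^sup>2) * (k * (k * M\<^sup>2 + M)) / (R\<^sup>2 / 2)\<^sup>2"
    using gap R2 b2 assms(6)
    by (intro frac_le mult_right_mono mult_left_mono power_mono) auto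
  also have "\<dots> = 64 * (k * (k * M\<^sup>2 + M)) / R\<^sup>2"
    using assms(1) by (simp add: field_simps power2_eq_square)
  finally have second_order: "4 * b\<^sup>2 * (k * (k * M\<^sup>2 + M)) / (b\<^sup>2 - a\<^sup>2)\<^sup>2 \<le> 64 * (k * (k * M\<^sup>2 + M)) / R\<^sup>2" .
  show ?thesis
    unfolding add_divide_distrib by (rule add_mono[OF second_order first_order])
qed

lemma power_le_powr_power:
  fixes q m :: real and k :: nat
  assumes "0 < q" "q \<le> 1" "k * m \<le> k - 2" "2 \<le> k"
  shows "q ^ (k - 2) \<le> (q ^ k) powr m"
proof -
  have "q ^ (k - 2) = q powr (real (k - 2))"
    using assms(1) by (simp add: powr_realpow)
  also have "\<dots> \<le> q powr (k * m)"
    using assms by (intro powr_mono') (auto simp: of_nat_diff)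
  also have "\<dots> = (q ^ k) powr m"
    using assms(1) by (simp add: powr_powr flip: powr_realpow)
  finally show ?thesis .
qed

definition standard_cutoff :: "(real^'n \<Rightarrow> real) \<Rightarrow> real^'n \<Rightarrow> real \<Rightarrow> bool" where
  "standard_cutoff \<phi> x0 R \<longleftrightarrow> C2 \<phi> \<and> closure {x. \<phi> x \<noteq> 0} \<subseteq> ball x0 (2 * R) \<and>
     (\<forall>x\<in>ball x0 R. \<phi> x = 1) \<and> (\<forall>x. 0 \<le> \<phi> x \<and> \<phi> x \<le> 1)"

lemma cutoff_function_exists:
  fixes m \<gamma> \<beta> :: real
  assumes "0 < m" "m < 1"
  obtains K where "0 < K"
    "\<And>(x0::real^'n) R. 0 < R \<Longrightarrow> \<exists>\<phi>. standard_cutoff \<phi> x0 R \<and>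
       (\<forall>x. x \<noteq> 0 \<longrightarrow> L_op \<gamma> \<beta> \<phi> x \<noteq> 0 \<longrightarrow>
          0 < \<phi> x \<and> R / 5 \<le> norm x \<and> norm (x - x0) \<le> 2 * R \<and>
          \<bar>L_op \<gamma> \<beta> \<phi> x\<bar> \<le> K * norm x powr (\<gamma> - \<beta>) / R\<^sup>2 * \<phi> x powr m)"
proof -
  obtain M where M: "0 < M" "\<And>s. \<bar>smooth_step' s\<bar> \<le> M" "\<And>s. \<bar>smooth_step'' s\<bar> \<le> M"
    using smooth_step_derivs_bounded by blast
  define k where "k = nat \<lceil>2 / (1 - m)\<rceil> + 2"
  have k: "2 \<le> k" "k * m \<le> k - 2"
  proof -
    have "2 / (1 - m) \<le> real k"
      unfolding k_def by linarith
    then show "2 \<le> k" "k * m \<le> k - 2"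
      using assms by (simp_all add: k_def divide_le_eq algebra_simps)
  qed
  define K where "K = 64 * (k * (k * M\<^sup>2 + M)) + (4 * CARD('n) + 40 * \<bar>\<beta>\<bar>) * (k * M)"
  show ?thesis
  proof (rule that)
    show "0 < K"
      unfolding K_def using M(1) k(1) by (intro add_pos_nonneg mult_pos_pos add_nonneg_pos) auto
    fix x0 :: "real^'n" and R :: real
    assume R: "0 < R"
    obtain a where a: "R \<le> a" "a + R / 4 < 2 * R"
      and away: "\<And>x. a < norm (x - x0) \<Longrightarrow> norm (x - x0) < a + R / 4 \<Longrightarrow> R / 5 \<le> norm x"
      using annulus_avoiding_origin[OF R] by blast
    define b where "b = a + R / 4"
    define \<phi> where "\<phi> = (\<lambda>y. cutoff_profile k (a\<^sup>2) (b\<^sup>2) ((y - x0) \<bullet> (y - x0)))"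
    have ab: "0 < a" "a < b"
      using R a by (simp_all add: b_def)
    have "0 < k"
      using k(1) by simp
    then have \<phi>: "C2 \<phi>" "closure {x. \<phi> x \<noteq> 0} \<subseteq> cball x0 b" "\<forall>x\<in>cball x0 a. \<phi> x = 1"
        "\<forall>x. 0 \<le> \<phi> x \<and> \<phi> x \<le> 1"
      unfolding \<phi>_def by (rule radial_cutoff[OF ab])+
    have "ball x0 R \<subseteq> cball x0 a" "cball x0 b \<subseteq> ball x0 (2 * R)"
      using a by (auto simp: b_def)
    moreover have "0 < \<phi> x \<and> R / 5 \<le> norm x \<and> norm (x - x0) \<le> 2 * R \<and>
        \<bar>L_op \<gamma> \<beta> \<phi> x\<bar> \<le> K * norm x powr (\<gamma> - \<beta>) / R\<^sup>2 * \<phi> x powr m"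
      if x0: "x \<noteq> 0" and L0: "L_op \<gamma> \<beta> \<phi> x \<noteq> 0" for x
    proof -
      obtain q where q: "0 < q" "q \<le> 1" "\<phi> x = q ^ k" "a < norm (x - x0)" "norm (x - x0) < b"
        and L: "\<bar>L_op \<gamma> \<beta> \<phi> x\<bar> \<le> norm x powr (\<gamma> - \<beta>) *
          (4 * b\<^sup>2 * (k * (k * M\<^sup>2 + M)) / (b\<^sup>2 - a\<^sup>2)\<^sup>2
           + 2 * (CARD('n) + \<bar>\<beta>\<bar> * b / norm x) * (k * M) / (b\<^sup>2 - a\<^sup>2)) * q ^ (k - 2)"
        using L_op_radial_cutoff_le[OF ab k(1) x0 M(2,3), of \<gamma> \<beta>] L0 unfolding \<phi>_def by blast
      have x: "R / 5 \<le> norm x"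
        using away q(4,5) by (simp add: b_def)
      have "4 * b\<^sup>2 * (k * (k * M\<^sup>2 + M)) / (b\<^sup>2 - a\<^sup>2)\<^sup>2
           + 2 * (CARD('n) + \<bar>\<beta>\<bar> * b / norm x) * (k * M) / (b\<^sup>2 - a\<^sup>2) \<le> K / R\<^sup>2"
        unfolding K_def using cutoff_coefficient_le[OF R a(1) b_def _ x] a(2) M(1) by (simp add: b_def)
      then have "\<bar>L_op \<gamma> \<beta> \<phi> x\<bar> \<le> norm x powr (\<gamma> - \<beta>) * (K / R\<^sup>2) * q ^ (k - 2)"
        using q(1) by (intro order_trans[OF L] mult_right_mono mult_left_mono) auto
      also have "\<dots> \<le> norm x powr (\<gamma> - \<beta>) * (K / R\<^sup>2) * \<phi> x powr m"
        unfolding q(3) using power_le_powr_power[OF q(1,2) k(2,1)] M(1) k(1)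
        by (intro mult_left_mono) (auto simp: K_def)
      finally show ?thesis
        using q x a(2) by (simp add: b_def mult_ac)
    qed
    ultimately show "\<exists>\<phi>. standard_cutoff \<phi> x0 R \<and>
       (\<forall>x. x \<noteq> 0 \<longrightarrow> L_op \<gamma> \<beta> \<phi> x \<noteq> 0 \<longrightarrow>
          0 < \<phi> x \<and> R / 5 \<le> norm x \<and> norm (x - x0) \<le> 2 * R \<and>
          \<bar>L_op \<gamma> \<beta> \<phi> x\<bar> \<le> K * norm x powr (\<gamma> - \<beta>) / R\<^sup>2 * \<phi> x powr m)"
      using \<phi> unfolding standard_cutoff_def by (intro exI[of _ \<phi>]) blast
  qed
qed

lemma rho_exponent_gt:
  fixes \<beta> \<gamma> :: real
  assumes "\<gamma> - 2 < \<beta>"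
  shows "- real DIM(real^'n::finite) < (\<beta> - \<gamma>) * CARD('n) / 2"
proof -
  have "- 2 * real CARD('n) < (\<beta> - \<gamma>) * real CARD('n)"
    using assms by (intro mult_strict_right_mono) auto
  then show ?thesis
    by simp
qed

lemma rho_pos:
  fixes x0 :: "real^'n" and \<beta> \<gamma> R :: real
  assumes "\<gamma> - 2 < \<beta>" "0 < R"
  shows "0 < rho \<gamma> \<beta> x0 R"
  using integral_norm_powr_ball_pos[OF rho_exponent_gt[OF assms(1)] assms(2), of x0]
  unfolding rho_def by simp

lemma rho_le:
  fixes x0 x :: "real^'n" and \<beta> \<gamma> K R :: real
  assumes "0 < K" "0 < R" "0 < norm x"
    and "integral (ball x0 R) (\<lambda>y. norm y powr ((\<beta> - \<gamma>) * CARD('n) / 2))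
         \<le> K * R ^ CARD('n) * norm x powr ((\<beta> - \<gamma>) * CARD('n) / 2)"
  shows "rho \<gamma> \<beta> x0 R \<le> K powr (2 / CARD('n)) * R\<^sup>2 * norm x powr (\<beta> - \<gamma>)"
proof -
  have "0 \<le> integral (ball x0 R) (\<lambda>y. norm y powr ((\<beta> - \<gamma>) * CARD('n) / 2))"
    \<comment> \<open>a non-integrable function has integral 0\<close>
    by (cases "(\<lambda>y. norm y powr ((\<beta> - \<gamma>) * CARD('n) / 2)) integrable_on ball x0 R")
       (simp_all add: integral_nonneg not_integrable_integral)
  then have "rho \<gamma> \<beta> x0 R \<le> (K * R ^ CARD('n) * norm x powr ((\<beta> - \<gamma>) * CARD('n) / 2)) powr (2 / CARD('n))"
    unfolding rho_def using assms(4) by (rule powr_mono2[rotated]) simp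
  also have "\<dots> = K powr (2 / CARD('n)) * (R ^ CARD('n)) powr (2 / CARD('n))
      * (norm x powr ((\<beta> - \<gamma>) * CARD('n) / 2)) powr (2 / CARD('n))"
    using assms(1,2) by (simp add: powr_mult)
  also have "(R ^ CARD('n)) powr (2 / CARD('n)) = (R powr CARD('n)) powr (2 / CARD('n))"
    using assms(2) by (simp add: powr_realpow)
  also have "\<dots> = R\<^sup>2"
    using assms(2) by (simp add: powr_powr powr_numeral)
  also have "(norm x powr ((\<beta> - \<gamma>) * CARD('n) / 2)) powr (2 / CARD('n)) = norm x powr (\<beta> - \<gamma>)"
    by (simp add: powr_powr)
  finally show ?thesis .
qed

lemma powr_ratio_le:
  fixes \<Phi> \<Lambda> Y \<rho> C m :: real
  assumes "0 < \<Phi>" "0 < \<rho>" "0 < m" "m < 1" "\<bar>\<Lambda>\<bar> \<le> \<Phi> powr m * Y" "Y * \<rho> \<le> C"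
  shows "\<Phi> powr (- m / (1 - m)) * \<bar>\<Lambda>\<bar> powr (1 / (1 - m)) \<le> C powr (1 / (1 - m)) * \<rho> powr (- 1 / (1 - m))"
proof -
  define p where "p = 1 / (1 - m)"
  have p: "0 < p"
    using assms(4) by (simp add: p_def)
  have "0 \<le> \<Phi> powr m * Y"
    using assms(5) abs_ge_zero order_trans by blast
  then have Y: "0 \<le> Y"
    using assms(1) by (simp add: zero_le_mult_iff)
  have "\<Phi> powr (- (m * p)) * \<bar>\<Lambda>\<bar> powr p \<le> \<Phi> powr (- (m * p)) * (\<Phi> powr m * Y) powr p"
    using assms(5) p by (intro mult_left_mono powr_mono2) auto
  also have "\<dots> = Y powr p"
    using assms(1) Y by (simp add: powr_mult powr_powr powr_add[symmetric] mult.assoc[symmetric])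
  also have "\<dots> \<le> (C / \<rho>) powr p"
    using assms(2,6) Y p by (intro powr_mono2) (auto simp: le_divide_eq)
  also have "\<dots> = C powr p * \<rho> powr (- p)"
    by (simp add: powr_divide powr_minus_divide)
  finally show ?thesis
    by (simp add: p_def)
qed

lemma weighted_power_le_rho:
  fixes x0 x :: "real^'n" and \<Phi> \<Lambda> K1 K2 R m \<beta> \<gamma> :: real
  assumes "0 < m" "m < 1" "\<gamma> - 2 < \<beta>" "0 < R" "0 < K2" "x \<noteq> 0" "0 < \<Phi>" "0 < K1"
    and "\<bar>\<Lambda>\<bar> \<le> K1 * norm x powr (\<gamma> - \<beta>) / R\<^sup>2 * \<Phi> powr m"
    and "integral (ball x0 R) (\<lambda>y. norm y powr ((\<beta> - \<gamma>) * CARD('n) / 2))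
         \<le> K2 * R ^ CARD('n) * norm x powr ((\<beta> - \<gamma>) * CARD('n) / 2)"
  shows "\<Phi> powr (- m / (1 - m)) * \<bar>\<Lambda>\<bar> powr (1 / (1 - m))
         \<le> (K1 * K2 powr (2 / CARD('n))) powr (1 / (1 - m)) * rho \<gamma> \<beta> x0 R powr (- 1 / (1 - m))"
proof (rule powr_ratio_le[OF assms(7) rho_pos[OF assms(3,4)] assms(1,2)])
  show "\<bar>\<Lambda>\<bar> \<le> \<Phi> powr m * (K1 * norm x powr (\<gamma> - \<beta>) / R\<^sup>2)"
    using assms(9) by (simp add: mult.commute)
  have "K1 * norm x powr (\<gamma> - \<beta>) / R\<^sup>2 * rho \<gamma> \<beta> x0 R
      \<le> K1 * norm x powr (\<gamma> - \<beta>) / R\<^sup>2 * (K2 powr (2 / CARD('n)) * R\<^sup>2 * norm x powr (\<beta> - \<gamma>))"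
    using rho_le[OF assms(5,4) _ assms(10)] assms(6,8) by (intro mult_left_mono) auto
  also have "\<dots> = K1 * K2 powr (2 / CARD('n)) * (norm x powr (\<gamma> - \<beta>) * norm x powr (\<beta> - \<gamma>))"
    using assms(4) by simp
  also have "\<dots> = K1 * K2 powr (2 / CARD('n))"
    using assms(6) by (simp flip: powr_add)
  finally show "K1 * norm x powr (\<gamma> - \<beta>) / R\<^sup>2 * rho \<gamma> \<beta> x0 R \<le> K1 * K2 powr (2 / CARD('n))" .
qed

theorem lemma5p5:
  fixes \<gamma> \<beta> m :: real
  assumes N3: "CARD('n) \<ge> 3"
    and m: "0 < m" "m < 1"
    and g: "\<gamma> < real CARD('n)"
    and b1: "\<gamma> - 2 < \<beta>"
    and b2: "\<beta> \<le> (real CARD('n) - 2) / real CARD('n) * \<gamma>"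
  shows "\<exists>\<kappa>>0. \<forall>(x0::real^'n) R. R > 0 \<longrightarrow>
    (\<exists>\<phi>::real^'n \<Rightarrow> real. C2 \<phi> \<and>
       closure {x. \<phi> x \<noteq> 0} \<subseteq> ball x0 (2 * R) \<and>
       (\<forall>x\<in>ball x0 R. \<phi> x = 1) \<and>
       (\<forall>x. 0 \<le> \<phi> x \<and> \<phi> x \<le> 1) \<and>
       (\<forall>x. x \<noteq> 0 \<longrightarrow> L_op \<gamma> \<beta> \<phi> x \<noteq> 0 \<longrightarrow>
          \<phi> x > 0 \<and>
          \<phi> x powr (- m / (1 - m)) * \<bar>L_op \<gamma> \<beta> \<phi> x\<bar> powr (1 / (1 - m))
            \<le> \<kappa> * (rho \<gamma> \<beta> x0 R) powr (- 1 / (1 - m))))"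
proof -
  obtain K2 where K2: "0 < K2" "\<And>(x0::real^'n) x R. 0 < R \<Longrightarrow> R / 5 \<le> norm x \<Longrightarrow> norm (x - x0) \<le> 2 * R \<Longrightarrow>
      integral (ball x0 R) (\<lambda>y. norm y powr ((\<beta> - \<gamma>) * CARD('n) / 2))
      \<le> K2 * R ^ CARD('n) * norm x powr ((\<beta> - \<gamma>) * CARD('n) / 2)"
    using integral_norm_powr_ball_le[OF rho_exponent_gt[OF b1]] by auto
  obtain K1 where K1: "0 < K1" "\<And>(x0::real^'n) R. 0 < R \<Longrightarrow> \<exists>\<phi>. standard_cutoff \<phi> x0 R \<and>
       (\<forall>x. x \<noteq> 0 \<longrightarrow> L_op \<gamma> \<beta> \<phi> x \<noteq> 0 \<longrightarrow>
          0 < \<phi> x \<and> R / 5 \<le> norm x \<and> norm (x - x0) \<le> 2 * R \<and>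
          \<bar>L_op \<gamma> \<beta> \<phi> x\<bar> \<le> K1 * norm x powr (\<gamma> - \<beta>) / R\<^sup>2 * \<phi> x powr m)"
    using cutoff_function_exists[OF m] by blast
  show ?thesis
  proof (intro exI[of _ "(K1 * K2 powr (2 / CARD('n))) powr (1 / (1 - m))"] conjI allI impI, goal_cases)
    case 1
    show ?case
      using K1(1) K2(1) by simp
  next
    case (2 x0 R)
    then obtain \<phi> where \<phi>: "standard_cutoff \<phi> x0 R"
      and L: "\<And>x. x \<noteq> 0 \<Longrightarrow> L_op \<gamma> \<beta> \<phi> x \<noteq> 0 \<Longrightarrow>
          0 < \<phi> x \<and> R / 5 \<le> norm x \<and> norm (x - x0) \<le> 2 * R \<and>
          \<bar>L_op \<gamma> \<beta> \<phi> x\<bar> \<le> K1 * norm x powr (\<gamma> - \<beta>) / R\<^sup>2 * \<phi> x powr m"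
      using K1(2) by blast
    have "\<phi> x powr (- m / (1 - m)) * \<bar>L_op \<gamma> \<beta> \<phi> x\<bar> powr (1 / (1 - m))
        \<le> (K1 * K2 powr (2 / CARD('n))) powr (1 / (1 - m)) * (rho \<gamma> \<beta> x0 R) powr (- 1 / (1 - m))"
      if "x \<noteq> 0" "L_op \<gamma> \<beta> \<phi> x \<noteq> 0" for x
      using L[OF that] K2(2)[OF 2] that(1)
      by (intro weighted_power_le_rho[OF m b1 2 K2(1) _ _ K1(1)]) auto
    then show ?case
      using \<phi> L unfolding standard_cutoff_def by blast
  qed
qed

end
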